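(* Let $n,m\in\mathbb{N}$. (i) Let $\phi\in C(\mathbb{R};\mathbb{C})$ and $\varrho:\mathbb{C}\to\mathbb{C}$, $\varrho(z)=\phi(\mathrm{Re}(z))$. Then $\mathcal{NN}^\varrho_{n,m,2n-1}$ is not universal. (ii) Let $\varrho:\mathbb{C}\to\mathbb{R}$ (real-valued). Then $\mathcal{NN}^\varrho_{n,m,2m-1}$ is not universal.
   Context: For $\varrho:\mathbb{C}\to\mathbb{C}$ and $n,m,W\in\mathbb{N}$, $\mathcal{NN}^\varrho_{n,m,W}$ denotes the set of all functions $\mathbb{C}^n\to\mathbb{C}^m$ of the form $V_L\circ\varrho^{\times W}\circ V_{L-1}\circ\cdots\circ\varrho^{\times W}\circ V_1$ with arbitrary depth $L\ge 2$, where $V_1:\mathbb{C}^n\to\mathbb{C}^W$, $V_2,\dots,V_{L-1}:\mathbb{C}^W\to\mathbb{C}^W$, $V_L:\mathbb{C}^W\to\mathbb{C}^m$ are $\mathbb{C}$-affine maps ($z\mapsto Az+b$ with complex $A,b$) and $\varrho^{\times W}$ applies $\varrho$ componentwise. A class $\mathcal{F}$ of functions $\mathbb{C}^n\to\mathbb{C}^m$ is universal if for every $g\in C(\mathbb{C}^n;\mathbb{C}^m)$, compact $K\subseteq\mathbb{C}^n$ and $\varepsilon>0$ there is $f\in\mathcal{F}$ with $\sup_{z\in K}\|f(z)-g(z)\|<\varepsilon$. *)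

theory Defs
  imports "HOL-Analysis.Analysis"
begin

text \<open>Hidden layers of width W are represented as functions nat \<Rightarrow> complex,
 only the coordinates i < W being meaningful (others are kept 0).\<close>

definition affine_in :: "nat \<Rightarrow> (nat \<Rightarrow> 'n::finite \<Rightarrow> complex) \<Rightarrow> (nat \<Rightarrow> complex)
    \<Rightarrow> complex^'n \<Rightarrow> (nat \<Rightarrow> complex)" where
  "affine_in W A b z = (\<lambda>i. if i < W then (\<Sum>j\<in>UNIV. A i j * z $ j) + b i else 0)"

definition affine_hid :: "nat \<Rightarrow> (nat \<Rightarrow> nat \<Rightarrow> complex) \<Rightarrow> (nat \<Rightarrow> complex)
    \<Rightarrow> (nat \<Rightarrow> complex) \<Rightarrow> (nat \<Rightarrow> complex)" where
  "affine_hid W A b h = (\<lambda>i. if i < W then (\<Sum>j<W. A i j * h j) + b i else 0)"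

definition affine_out :: "nat \<Rightarrow> ('m::finite \<Rightarrow> nat \<Rightarrow> complex) \<Rightarrow> ('m \<Rightarrow> complex)
    \<Rightarrow> (nat \<Rightarrow> complex) \<Rightarrow> complex^'m" where
  "affine_out W A b h = (\<chi> i. (\<Sum>j<W. A i j * h j) + b i)"

definition act :: "(complex \<Rightarrow> complex) \<Rightarrow> nat \<Rightarrow> (nat \<Rightarrow> complex) \<Rightarrow> (nat \<Rightarrow> complex)" where
  "act \<rho> W h = (\<lambda>i. if i < W then \<rho> (h i) else 0)"

text \<open>NN^rho_{n,m,W}: V_L o rho o V_{L-1} o ... o rho o V_1, L \<ge> 2 arbitrary;
 the list Hs holds the L-2 hidden affine maps V_2,...,V_{L-1} (in order).\<close>

definition NN :: "(complex \<Rightarrow> complex) \<Rightarrow> nat \<Rightarrow> (complex^'n::finite \<Rightarrow> complex^'m::finite) set" where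
  "NN \<rho> W = {f. \<exists>A1 b1 (Hs :: ((nat \<Rightarrow> nat \<Rightarrow> complex) \<times> (nat \<Rightarrow> complex)) list) AL bL.
      f = (\<lambda>z. affine_out W AL bL
              (fold (\<lambda>(A, b) h. act \<rho> W (affine_hid W A b h)) Hs
                 (act \<rho> W (affine_in W A1 b1 z))))}"

definition universal :: "('a::topological_space \<Rightarrow> 'b::real_normed_vector) set \<Rightarrow> bool" where
  "universal F \<longleftrightarrow> (\<forall>g. continuous_on UNIV g \<longrightarrow> (\<forall>K. compact K \<longrightarrow>
      (\<forall>\<epsilon>>0. \<exists>f\<in>F. \<forall>z\<in>K. norm (f z - g z) < \<epsilon>)))"

end

theory Submission
  imports Defs
begin

text \<open>Both parts are a dimension count over \<open>\<real>\<close>: \<open>\<complex>\<^sup>k\<close> is a real vector space of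
  dimension \<open>2k\<close>, so fewer than \<open>2k\<close> real-linear functionals have a common nonzero
  kernel vector, and fewer than \<open>2k\<close> vectors lie in a real hyperplane.
  (i) If the activation only sees real parts, the first layer only sees the \<open>W < 2n\<close>
  real-linear functionals \<open>z \<mapsto> Re (a\<^sub>i \<cdot> z)\<close>, so every network is constant along some
  unit direction and cannot approximate \<open>z \<mapsto> \<parallel>z\<parallel>\<close> on the unit ball.\<close>

lemma ex_unit_orthogonal_to_few:
  fixes S :: "'a::euclidean_space set"
  assumes "finite S" "card S < DIM('a)"
  obtains a where "norm a = 1" "\<And>x. x \<in> S \<Longrightarrow> a \<bullet> x = 0"
proof -
  have "dim S < DIM('a)"
    using dim_le_card'[OF assms(1)] assms(2) by linarith
  then obtain a :: 'a where "a \<noteq> 0" "span S \<subseteq> {x. a \<bullet> x = 0}"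
    using lowdim_subset_hyperplane by blast
  then show thesis
    by (intro that[of "a /\<^sub>R norm a"]) (auto dest: span_base)
qed

lemma ex_unit_orthogonal_to_image_lessThan:
  fixes w :: "nat \<Rightarrow> 'a::euclidean_space"
  assumes "W < DIM('a)"
  obtains a where "norm a = 1" "\<And>i. i < W \<Longrightarrow> a \<bullet> w i = 0"
proof -
  have "card (w ` {..<W}) < DIM('a)"
    using card_image_le[of "{..<W}" w] assms by simp
  then obtain a where "norm a = 1" "\<And>x. x \<in> w ` {..<W} \<Longrightarrow> a \<bullet> x = 0"
    using ex_unit_orthogonal_to_few[of "w ` {..<W}"] by blast
  then show thesis
    using that by blast
qed

lemma Re_sum_mult_vec_eq_inner:
  fixes x :: "complex^'n::finite"
  shows "Re (\<Sum>j\<in>UNIV. a j * x $ j) = (\<chi> j. cnj (a j)) \<bullet> x"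
  unfolding inner_vec_def by (simp add: inner_complex_def Re_sum)

lemma NN_Re_activation_periodic:
  fixes f :: "complex^'n::finite \<Rightarrow> complex^'m::finite"
  assumes "f \<in> NN (\<lambda>z. \<phi> (Re z)) W" "W < 2 * CARD('n)"
  obtains v where "norm v = 1" "\<And>x. f (x + v) = f x"
proof -
  obtain A1 b1 Hs AL bL where f: "f = (\<lambda>z. affine_out W AL bL
      (fold (\<lambda>(A, b) h. act (\<lambda>z. \<phi> (Re z)) W (affine_hid W A b h)) Hs
        (act (\<lambda>z. \<phi> (Re z)) W (affine_in W A1 b1 z))))"
    using assms(1) unfolding NN_def by blast
  obtain v :: "complex^'n" where v: "norm v = 1" "\<And>i. i < W \<Longrightarrow> v \<bullet> (\<chi> j. cnj (A1 i j)) = 0"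
    using ex_unit_orthogonal_to_image_lessThan[of W "\<lambda>i. \<chi> j. cnj (A1 i j)"] assms(2) by auto
  have Re_shift: "Re (affine_in W A1 b1 (x + v) i) = Re (affine_in W A1 b1 x i)" for x i
  proof (cases "i < W")
    case True
    have "Re (\<Sum>j\<in>UNIV. A1 i j * v $ j) = 0"
      using v(2)[OF True] Re_sum_mult_vec_eq_inner[of "A1 i" v] by (simp only: inner_commute)
    then show ?thesis
      by (simp add: affine_in_def distrib_left sum.distrib)
  qed (simp add: affine_in_def)
  then have "act (\<lambda>z. \<phi> (Re z)) W (affine_in W A1 b1 (x + v))
           = act (\<lambda>z. \<phi> (Re z)) W (affine_in W A1 b1 x)" for x
    by (auto simp: act_def Re_shift)
  then show thesis
    using that v(1) by (simp add: f)
qed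

lemma fold_preserves_real_values:
  assumes "\<forall>j. x j \<in> \<real>" "\<And>p y j. F p y j \<in> \<real>"
  shows "\<forall>j. fold F Hs x j \<in> \<real>"
  using assms(1) by (induction Hs arbitrary: x) (auto simp: assms(2))

lemma affine_out_real_in_hyperplane:
  fixes AL :: "'m::finite \<Rightarrow> nat \<Rightarrow> complex"
  assumes "W < 2 * CARD('m)"
  obtains u where "norm u = 1"
    "\<And>h. \<forall>j. h j \<in> \<real> \<Longrightarrow> u \<bullet> affine_out W AL bL h = u \<bullet> (\<chi> i. bL i)"
proof -
  define w where "w j = (\<chi> i. AL i j :: complex^'m)" for j
  obtain u where u: "norm u = 1" "\<And>j. j < W \<Longrightarrow> u \<bullet> w j = 0"
    using ex_unit_orthogonal_to_image_lessThan[of W w] assms by auto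
  have "u \<bullet> affine_out W AL bL h = u \<bullet> (\<chi> i. bL i)" if h: "\<forall>j. h j \<in> \<real>" for h
  proof -
    have "AL i j * h j = Re (h j) *\<^sub>R AL i j" for i j
      using h by (metis Reals_cases Re_complex_of_real mult.commute scaleR_conv_of_real)
    then have "affine_out W AL bL h = (\<Sum>j<W. Re (h j) *\<^sub>R w j) + (\<chi> i. bL i)"
      by (simp add: affine_out_def w_def vec_eq_iff sum_component)
    then show ?thesis
      using u(2) by (simp add: inner_add_right inner_sum_right)
  qed
  then show thesis
    using that u(1) by blast
qed

lemma NN_real_activation_in_hyperplane:
  fixes f :: "complex^'n::finite \<Rightarrow> complex^'m::finite"
  assumes "f \<in> NN \<rho> W" "\<forall>z. \<rho> z \<in> \<real>" "W < 2 * CARD('m)"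
  obtains u c where "norm u = 1" "\<And>z. u \<bullet> f z = c"
proof -
  obtain A1 b1 Hs AL bL where f: "f = (\<lambda>z. affine_out W AL bL
      (fold (\<lambda>(A, b) h. act \<rho> W (affine_hid W A b h)) Hs (act \<rho> W (affine_in W A1 b1 z))))"
    using assms(1) unfolding NN_def by blast
  obtain u where u: "norm u = 1"
    "\<And>h. \<forall>j. h j \<in> \<real> \<Longrightarrow> u \<bullet> affine_out W AL bL h = u \<bullet> (\<chi> i. bL i)"
    using affine_out_real_in_hyperplane assms(3) by blast
  have "\<forall>j. fold (\<lambda>(A, b) h. act \<rho> W (affine_hid W A b h)) Hs
              (act \<rho> W (affine_in W A1 b1 z)) j \<in> \<real>" for z
    by (rule fold_preserves_real_values) (simp_all add: act_def assms(2) case_prod_beta)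
  then have "u \<bullet> f z = u \<bullet> (\<chi> i. bL i)" for z
    unfolding f using u(2) by blast
  then show thesis
    using that u(1) by blast
qed

lemma hyperplane_far_from_zero_or_Basis:
  fixes u :: "'a::euclidean_space"
  assumes "norm u = 1"
  obtains q where "q \<in> insert 0 Basis" "1 / (2 * real DIM('a)) \<le> \<bar>u \<bullet> q - c\<bar>"
proof -
  define \<epsilon> where "\<epsilon> = 1 / (2 * real DIM('a))"
  have "\<exists>q \<in> insert 0 Basis. \<epsilon> \<le> \<bar>u \<bullet> q - c\<bar>"
  proof (rule ccontr)
    assume "\<not> (\<exists>q \<in> insert 0 Basis. \<epsilon> \<le> \<bar>u \<bullet> q - c\<bar>)"
    then have close: "\<bar>u \<bullet> q - c\<bar> < \<epsilon>" if "q \<in> insert 0 Basis" for q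
      using that not_le by blast
    have "\<bar>u \<bullet> b\<bar> < 2 * \<epsilon>" if "b \<in> Basis" for b
      using close[of 0] close[of b] that by (auto simp: abs_less_iff)
    then have "(\<Sum>b\<in>Basis. \<bar>u \<bullet> b\<bar>) < (\<Sum>b\<in>(Basis::'a set). 2 * \<epsilon>)"
      by (intro sum_strict_mono) auto
    also have "\<dots> = 1"
      by (simp add: \<epsilon>_def)
    finally show False
      using norm_le_l1[of u] assms by simp
  qed
  then show thesis
    using that unfolding \<epsilon>_def by blast
qed

lemma ex_continuous_hitting_finite_set:
  fixes Q :: "'b::real_inner set"
  assumes "finite Q"
  obtains g :: "complex^'n::finite \<Rightarrow> 'b" and K
  where "continuous_on UNIV g" "compact K" "Q \<subseteq> g ` K"
proof -
  obtain q where q: "bij_betw q {..<card Q} Q"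
    using assms by (metis ex_bij_betw_nat_finite lessThan_atLeast0)
  define p :: "nat \<Rightarrow> complex^'n" where "p k = (\<chi> j. of_nat k)" for k
  define K where "K = p ` {..<card Q}"
  have "finite K"
    by (simp add: K_def)
  have "continuous_on K (\<lambda>z. q (nat \<lfloor>Re (z $ undefined)\<rfloor>))"
    using \<open>finite K\<close> by (rule continuous_on_finite)
  then obtain g :: "complex^'n \<Rightarrow> 'b" where g: "continuous_on UNIV g"
      "\<And>z. z \<in> K \<Longrightarrow> g z = q (nat \<lfloor>Re (z $ undefined)\<rfloor>)"
    using Tietze_unbounded[of K _ UNIV] finite_imp_closed[OF \<open>finite K\<close>] by auto
  have "g (p k) = q k" if "k < card Q" for k
    using g(2) that by (simp add: K_def p_def)
  then have "g ` K = q ` {..<card Q}"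
    unfolding K_def image_image by simp
  then show thesis
    using that[OF g(1) finite_imp_compact[OF \<open>finite K\<close>]] q by (simp add: bij_betw_def)
qed

lemma NN_Re_activation_not_universal:
  assumes "W < 2 * CARD('n)"
  shows "\<not> universal (NN (\<lambda>z. \<phi> (Re z)) W :: (complex^'n::finite \<Rightarrow> complex^'m::finite) set)"
proof
  define g :: "complex^'n \<Rightarrow> complex^'m" where "g z = (\<chi> i. of_real (norm z))" for z
  have "continuous_on UNIV g"
    unfolding g_def by (intro continuous_intros)
  moreover assume "universal (NN (\<lambda>z. \<phi> (Re z)) W :: (complex^'n \<Rightarrow> complex^'m) set)"
  ultimately obtain f :: "complex^'n \<Rightarrow> complex^'m" where
    "f \<in> NN (\<lambda>z. \<phi> (Re z)) W" and close: "\<forall>z\<in>cball 0 1. norm (f z - g z) < 1/2"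
    unfolding universal_def using compact_cball[of 0 1] by (metis half_gt_zero zero_less_one)
  then obtain v where v: "norm v = 1" "\<And>x. f (x + v) = f x"
    using NN_Re_activation_periodic assms by blast
  have "f v = f 0"
    using v(2)[of 0] by simp
  have "g v - g 0 = (f 0 - g 0) - (f v - g v)"
    using \<open>f v = f 0\<close> by simp
  then have "norm (g v - g 0) \<le> norm (f 0 - g 0) + norm (f v - g v)"
    by (metis norm_triangle_ineq4)
  also have "\<dots> < 1/2 + 1/2"
    using close v(1) by (intro add_strict_mono) auto
  finally have "norm (g v - g 0) < 1"
    by simp
  moreover have "(g v - g 0) $ undefined = 1"
    using v(1) by (simp add: g_def)
  ultimately show False
    using Finite_Cartesian_Product.norm_nth_le[of "g v - g 0" undefined] by simp
qed

lemma NN_real_activation_not_universal: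
  assumes "\<forall>z. \<rho> z \<in> \<real>" "W < 2 * CARD('m)"
  shows "\<not> universal (NN \<rho> W :: (complex^'n::finite \<Rightarrow> complex^'m::finite) set)"
proof
  define \<epsilon> where "\<epsilon> = 1 / (2 * real DIM(complex^'m))"
  have "\<epsilon> > 0"
    by (simp add: \<epsilon>_def)
  obtain g :: "complex^'n \<Rightarrow> complex^'m" and K where
    g: "continuous_on UNIV g" "compact K" "insert 0 Basis \<subseteq> g ` K"
    using ex_continuous_hitting_finite_set[of "insert 0 Basis"] by auto
  assume "universal (NN \<rho> W :: (complex^'n \<Rightarrow> complex^'m) set)"
  then obtain f :: "complex^'n \<Rightarrow> complex^'m" where
    "f \<in> NN \<rho> W" and close: "\<forall>z\<in>K. norm (f z - g z) < \<epsilon>"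
    unfolding universal_def using g(1,2) \<open>\<epsilon> > 0\<close> by blast
  then obtain u c where u: "norm u = 1" "\<And>z. u \<bullet> f z = c"
    using NN_real_activation_in_hyperplane assms by blast
  then obtain q where "q \<in> insert 0 Basis" and far: "\<epsilon> \<le> \<bar>u \<bullet> q - c\<bar>"
    using hyperplane_far_from_zero_or_Basis unfolding \<epsilon>_def by blast
  then obtain z where "z \<in> K" "q = g z"
    using g(3) by blast
  then have "\<bar>u \<bullet> q - c\<bar> = \<bar>u \<bullet> (g z - f z)\<bar>"
    using u(2) by (simp add: inner_diff_right)
  also have "\<dots> \<le> norm (g z - f z)"
    using Cauchy_Schwarz_ineq2[of u] u(1) by simp
  also have "\<dots> < \<epsilon>"
    using close \<open>z \<in> K\<close> by (simp add: norm_minus_commute)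
  finally show False
    using far by simp
qed

theorem theorem6p4:
  shows "(\<forall>\<phi> :: real \<Rightarrow> complex. continuous_on UNIV \<phi> \<longrightarrow>
            \<not> universal (NN (\<lambda>z. \<phi> (Re z)) (2 * CARD('n::finite) - 1)
                          :: (complex^'n \<Rightarrow> complex^'m::finite) set))
       \<and> (\<forall>\<rho> :: complex \<Rightarrow> complex. (\<forall>z. \<rho> z \<in> \<real>) \<longrightarrow>
            \<not> universal (NN \<rho> (2 * CARD('m) - 1) :: (complex^'n \<Rightarrow> complex^'m) set))"
  by (intro conjI allI impI NN_Re_activation_not_universal NN_real_activation_not_universal) auto

end
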